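(* Let $F$ be a graph of diameter $2$, $n=|V(F)|$, and let $l>n$ be an integer. Then $z_1<z_2<\dots<z_{l-1}<z_l$.
   Context: All graphs are simple, finite, undirected. The $F$-degree of a vertex $v$ in $G$ is the number of subgraphs of $G$ (not necessarily induced) isomorphic to $F$ and containing $v$. $A_{2l-1}$ is the graph with vertex set $\{1,\dots,2l-1\}$ in which distinct $i,j$ are adjacent iff $|i-j|\le l-1$. $z_i$ denotes the $F$-degree of vertex $i$ in $A_{2l-1}$. *)

theory Defs
  imports Main
begin

definition graph :: "'a set \<Rightarrow> 'a set set \<Rightarrow> bool" where
  "graph V E \<longleftrightarrow> finite V \<and> (\<forall>e\<in>E. \<exists>x y. x \<in> V \<and> y \<in> V \<and> x \<noteq> y \<and> e = {x, y})"

fun walk :: "'a set set \<Rightarrow> nat \<Rightarrow> 'a \<Rightarrow> 'a \<Rightarrow> bool" where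
  "walk E 0 u v \<longleftrightarrow> u = v"
| "walk E (Suc k) u v \<longleftrightarrow> (\<exists>w. {u, w} \<in> E \<and> walk E k w v)"

definition connected_graph :: "'a set \<Rightarrow> 'a set set \<Rightarrow> bool" where
  "connected_graph V E \<longleftrightarrow> (\<forall>u\<in>V. \<forall>v\<in>V. \<exists>k. walk E k u v)"

definition gdist :: "'a set set \<Rightarrow> 'a \<Rightarrow> 'a \<Rightarrow> nat" where
  "gdist E u v = (LEAST k. walk E k u v)"

definition diameter2 :: "'a set \<Rightarrow> 'a set set \<Rightarrow> bool" where
  "diameter2 V E \<longleftrightarrow> V \<noteq> {} \<and> connected_graph V E \<and>
     Max {gdist E u v | u v. u \<in> V \<and> v \<in> V} = 2"

definition iso_subgraph ::
  "'b set \<Rightarrow> 'b set set \<Rightarrow> 'a set \<Rightarrow> 'a set set \<Rightarrow> 'a set \<Rightarrow> 'a set set \<Rightarrow> bool" where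
  "iso_subgraph VF EF V E W D \<longleftrightarrow>
     W \<subseteq> V \<and> D \<subseteq> E \<and> (\<forall>e\<in>D. e \<subseteq> W) \<and>
     (\<exists>f. bij_betw f VF W \<and>
          (\<forall>x\<in>VF. \<forall>y\<in>VF. {x, y} \<in> EF \<longleftrightarrow> {f x, f y} \<in> D))"

definition F_degree ::
  "'b set \<Rightarrow> 'b set set \<Rightarrow> 'a set \<Rightarrow> 'a set set \<Rightarrow> 'a \<Rightarrow> nat" where
  "F_degree VF EF V E v = card {(W, D). iso_subgraph VF EF V E W D \<and> v \<in> W}"

definition A_V :: "nat \<Rightarrow> nat set" where
  "A_V l = {1..2*l-1}"

definition A_E :: "nat \<Rightarrow> nat set set" where
  "A_E l = {{i, j} | i j. i \<in> A_V l \<and> j \<in> A_V l \<and> i \<noteq> j \<and>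
                         \<bar>int i - int j\<bar> \<le> int l - 1}"

end

theory Submission
  imports Defs
begin

text \<open>Moving vertex i to i + 1 (where i < l) maps every copy of F through i but not through
i + 1 injectively to a copy through i + 1 but not through i, because in A_{2l-1} every neighbour
of i other than i + 1 is also a neighbour of i + 1. The map misses the copy that stretches an
edge of F over {i + 1, i + l} and puts the remaining n - 2 < l - 2 vertices strictly between:
its preimage would have to contain the non-edge {i, i + l}.\<close>

lemma card_less_if_inj_on_Diff:
  assumes "finite A" "finite B" "inj_on f (A - B)" "f ` (A - B) \<subseteq> B - A"
    and "b \<in> B - A" "b \<notin> f ` (A - B)"
  shows "card A < card B"
proof -
  have "card (A - B) = card (f ` (A - B))" using assms(3) by (simp add: card_image)
  also have "\<dots> < card (B - A)" using assms(2,4-6) by (intro psubset_card_mono) auto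
  finally show ?thesis using card_le_sym_Diff[OF assms(2,1)] by (meson not_le)
qed

lemma inj_on_map_prod_image_Pow:
  assumes "inj_on s U"
  shows "inj_on (map_prod (image s) (image (image s))) (Pow U \<times> Pow (Pow U))"
proof -
  have "inj_on (image s) (Pow U)" using assms by (rule inj_on_image_Pow)
  from this inj_on_image_Pow[OF this] show ?thesis by (rule map_prod_inj_on)
qed

lemma inj_on_with_two_values:
  assumes "finite V" "a \<in> V" "b \<in> V" "a \<noteq> b"
    and "finite T" "card V \<le> card T + 2" "a' \<notin> T" "b' \<notin> T" "a' \<noteq> b'"
  obtains g where "inj_on g V" "g a = a'" "g b = b'" "g ` V \<subseteq> insert a' (insert b' T)"
proof -
  define R where "R = V - {a, b}"
  have V_split: "V = insert a (insert b R)" and "a \<notin> R" "b \<notin> R"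
    using assms(2-4) by (auto simp: R_def)
  have "card R \<le> card T" using assms(1-4,6) by (simp add: R_def card_Diff_subset)
  then obtain h where h: "h ` R \<subseteq> T" "inj_on h R"
    using card_le_inj assms(1,5) by (metis R_def finite_Diff)
  define g where "g = h(a := a', b := b')"
  have g_R: "g ` R = h ` R" using \<open>a \<notin> R\<close> \<open>b \<notin> R\<close> by (auto simp: g_def)
  have gab: "g a = a'" "g b = b'" using assms(4) by (simp_all add: g_def)
  have "inj_on g R"
    using h(2) by (rule inj_on_cong[THEN iffD1, rotated]) (use \<open>a \<notin> R\<close> \<open>b \<notin> R\<close> in \<open>auto simp: g_def\<close>)
  moreover have "a' \<notin> h ` R" "b' \<notin> h ` R" using h(1) assms(7,8) by auto
  ultimately have "inj_on g V"
    using assms(9) \<open>a \<notin> R\<close> \<open>b \<notin> R\<close> by (simp add: V_split gab g_R insert_Diff_if)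
  moreover have "g ` V \<subseteq> insert a' (insert b' T)" using h(1) by (auto simp: V_split gab g_R)
  ultimately show ?thesis using gab that by blast
qed

lemma graph_edgeE:
  assumes "graph V E" "e \<in> E"
  obtains x y where "e = {x, y}" "x \<in> V" "y \<in> V" "x \<noteq> y"
  using assms unfolding graph_def by auto

lemma diameter2_obtains_edge:
  assumes "graph VF EF" "diameter2 VF EF"
  obtains a b where "{a, b} \<in> EF"
proof -
  let ?dists = "{gdist EF u v | u v. u \<in> VF \<and> v \<in> VF}"
  have "?dists = (\<lambda>(u, v). gdist EF u v) ` (VF \<times> VF)" by auto
  then have "finite ?dists" using assms(1) by (simp add: graph_def)
  moreover have "?dists \<noteq> {}" using assms(2) by (auto simp: diameter2_def)
  ultimately have "Max ?dists \<in> ?dists" by (rule Max_in)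
  then obtain u v where uv: "u \<in> VF" "v \<in> VF" "gdist EF u v = 2"
    using assms(2) by (auto simp: diameter2_def)
  have "gdist EF u u = 0" unfolding gdist_def by (rule Least_eq_0) simp
  with uv have "u \<noteq> v" by auto
  obtain k where "walk EF k u v"
    using assms(2) uv by (auto simp: diameter2_def connected_graph_def)
  with \<open>u \<noteq> v\<close> show ?thesis by (cases k) (auto intro: that)
qed

lemma iso_subgraph_self:
  assumes "graph VF EF"
  shows "iso_subgraph VF EF VF EF VF EF"
  unfolding iso_subgraph_def
proof (intro conjI exI)
  show "\<forall>e\<in>EF. e \<subseteq> VF" using assms by (auto elim: graph_edgeE)
  show "bij_betw id VF VF" by (rule bij_betw_id)
qed auto

lemma iso_subgraph_image:
  assumes iso: "iso_subgraph VF EF V E W D"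
    and inj: "inj_on s W" and "s ` W \<subseteq> V'" and "\<forall>e\<in>D. s ` e \<in> E'"
  shows "iso_subgraph VF EF V' E' (s ` W) (image s ` D)"
proof -
  obtain f where DW: "\<forall>e\<in>D. e \<subseteq> W" and f: "bij_betw f VF W"
    and fD: "\<forall>x\<in>VF. \<forall>y\<in>VF. {x, y} \<in> EF \<longleftrightarrow> {f x, f y} \<in> D"
    using iso unfolding iso_subgraph_def by auto
  have injD: "inj_on (image s) (Pow W)" using inj by (rule inj_on_image_Pow)
  have sfD: "{x, y} \<in> EF \<longleftrightarrow> {(s \<circ> f) x, (s \<circ> f) y} \<in> image s ` D"
    if "x \<in> VF" "y \<in> VF" for x y
  proof -
    have "{f x, f y} \<in> Pow W" using f that by (auto simp: bij_betw_def)
    moreover have "D \<subseteq> Pow W" using DW by auto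
    ultimately have "s ` {f x, f y} \<in> image s ` D \<longleftrightarrow> {f x, f y} \<in> D"
      using injD by (intro inj_on_image_mem_iff)
    then show ?thesis using fD that by simp
  qed
  show ?thesis
    unfolding iso_subgraph_def
  proof (intro conjI exI)
    show "bij_betw (s \<circ> f) VF (s ` W)"
      using bij_betw_trans[OF f inj_on_imp_bij_betw[OF inj]] .
    show "\<forall>x\<in>VF. \<forall>y\<in>VF. {x, y} \<in> EF \<longleftrightarrow> {(s \<circ> f) x, (s \<circ> f) y} \<in> image s ` D"
      using sfD by blast
  qed (use assms DW in fastforce)+
qed

lemma iso_subgraph_embedding:
  assumes "graph VF EF" "inj_on g VF" "g ` VF \<subseteq> V" "\<forall>e\<in>EF. g ` e \<in> E"
  shows "iso_subgraph VF EF V E (g ` VF) (image g ` EF)"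
  using iso_subgraph_image[OF iso_subgraph_self] assms by blast

definition copies_through ::
  "'b set \<Rightarrow> 'b set set \<Rightarrow> 'a set \<Rightarrow> 'a set set \<Rightarrow> 'a \<Rightarrow> ('a set \<times> 'a set set) set" where
  "copies_through VF EF V E v = {(W, D). iso_subgraph VF EF V E W D \<and> v \<in> W}"

lemma F_degree_eq_card_copies_through:
  "F_degree VF EF V E v = card (copies_through VF EF V E v)"
  by (simp add: F_degree_def copies_through_def)

lemma finite_copies_through:
  assumes "finite V" "finite E"
  shows "finite (copies_through VF EF V E v)"
proof (rule finite_subset)
  show "copies_through VF EF V E v \<subseteq> Pow V \<times> Pow E"
    unfolding copies_through_def iso_subgraph_def by auto
qed (use assms in simp)

lemma A_E_iff:
  "{x, y} \<in> A_E l \<longleftrightarrow> x \<in> A_V l \<and> y \<in> A_V l \<and> x \<noteq> y \<and> \<bar>int x - int y\<bar> \<le> int l - 1"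
  unfolding A_E_def by (auto simp: doubleton_eq_iff abs_minus_commute)

lemma A_E_elem:
  assumes "e \<in> A_E l"
  obtains x y where "e = {x, y}" "{x, y} \<in> A_E l"
  using assms unfolding A_E_def by blast

lemma finite_A_E: "finite (A_E l)"
proof (rule finite_subset)
  show "A_E l \<subseteq> Pow (A_V l)" unfolding A_E_def by auto
qed (simp add: A_V_def)

lemma A_E_window:
  assumes "j + l \<le> 2 * l - 1" "x \<in> {j + 1..j + l}" "y \<in> {j + 1..j + l}" "x \<noteq> y"
  shows "{x, y} \<in> A_E l"
  using assms unfolding A_E_iff A_V_def by auto

lemma A_E_not_far: "{i, i + l} \<notin> A_E l"
  unfolding A_E_iff by simp

lemma A_E_shift_right:
  assumes "i < l" "{i, y} \<in> A_E l" "y \<noteq> i + 1"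
  shows "{i + 1, y} \<in> A_E l"
  using assms unfolding A_E_iff A_V_def by auto

lemma A_shift_misses_stretched_edge:
  assumes "D \<subseteq> A_E l" "\<forall>e\<in>D. i + 1 \<notin> e"
  shows "{i + 1, i + l} \<notin> image (id(i := i + 1)) ` D"
proof
  assume "{i + 1, i + l} \<in> image (id(i := i + 1)) ` D"
  then obtain e where "e \<in> D" and shifted: "{i + 1, i + l} = id(i := i + 1) ` e" ..
  with assms have "e \<in> A_E l" "i + 1 \<notin> e" by auto
  obtain x y where e: "e = {x, y}" and "{x, y} \<in> A_E l" using \<open>e \<in> A_E l\<close> by (rule A_E_elem)
  then have "x \<noteq> y" "\<bar>int x - int y\<bar> \<le> int l - 1" by (auto simp: A_E_iff)
  then have "2 \<le> l" by linarith
  have "i \<in> e"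
  proof -
    obtain z where "z \<in> e" "(id(i := i + 1)) z = i + 1" using shifted by (metis imageE insertI1)
    with \<open>i + 1 \<notin> e\<close> show ?thesis by (cases "z = i") auto
  qed
  moreover have "i + l \<in> e"
  proof -
    obtain z where "z \<in> e" "(id(i := i + 1)) z = i + l" using shifted by (metis imageE insertCI)
    with \<open>2 \<le> l\<close> show ?thesis by (cases "z = i") auto
  qed
  ultimately have "e = {i, i + l}" using e \<open>x \<noteq> y\<close> \<open>2 \<le> l\<close> by auto
  with \<open>e \<in> A_E l\<close> show False using A_E_not_far by simp
qed

lemma iso_subgraph_A_shift:
  assumes il: "i < l" and iso: "iso_subgraph VF EF (A_V l) (A_E l) W D" and i1: "i + 1 \<notin> W"
  shows "iso_subgraph VF EF (A_V l) (A_E l) (id(i := i + 1) ` W) (image (id(i := i + 1)) ` D)"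
proof (rule iso_subgraph_image[OF iso])
  let ?s = "id(i := i + 1)"
  have WV: "W \<subseteq> A_V l" and DE: "D \<subseteq> A_E l" and DW: "\<forall>e\<in>D. e \<subseteq> W"
    using iso unfolding iso_subgraph_def by auto
  show "inj_on ?s W" using i1 by (auto simp: inj_on_def)
  show "?s ` W \<subseteq> A_V l" using WV il by (auto simp: A_V_def)
  show "\<forall>e\<in>D. ?s ` e \<in> A_E l"
  proof
    fix e assume "e \<in> D"
    then obtain x y where e: "e = {x, y}" "{x, y} \<in> A_E l" and "x \<noteq> i + 1" "y \<noteq> i + 1"
      using DE DW i1 by (metis A_E_elem insert_subset subsetD)
    then consider "x = i" | "y = i" | "x \<noteq> i" "y \<noteq> i" by blast
    then show "?s ` e \<in> A_E l"
    proof cases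
      case 1
      then have "{i + 1, y} \<in> A_E l" using e \<open>y \<noteq> i + 1\<close> il by (intro A_E_shift_right) auto
      then show ?thesis using 1 e by (auto simp: A_E_iff)
    next
      case 2
      then have "{i + 1, x} \<in> A_E l" using e \<open>x \<noteq> i + 1\<close> il
        by (intro A_E_shift_right) (auto simp: insert_commute)
      then show ?thesis using 2 e by (auto simp: A_E_iff insert_commute)
    qed (use e in simp)
  qed
qed

lemma copies_through_A_shift:
  assumes "i < l"
    and "(W, D) \<in> copies_through VF EF (A_V l) (A_E l) i - copies_through VF EF (A_V l) (A_E l) (i + 1)"
  shows "(id(i := i + 1) ` W, image (id(i := i + 1)) ` D)
    \<in> copies_through VF EF (A_V l) (A_E l) (i + 1) - copies_through VF EF (A_V l) (A_E l) i"
proof -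
  have iso: "iso_subgraph VF EF (A_V l) (A_E l) W D" and "i \<in> W" "i + 1 \<notin> W"
    using assms(2) by (auto simp: copies_through_def)
  moreover have "i + 1 \<in> id(i := i + 1) ` W" using \<open>i \<in> W\<close> by force
  ultimately show ?thesis
    using iso_subgraph_A_shift[OF assms(1) iso] by (auto simp: copies_through_def)
qed

lemma iso_subgraph_A_window:
  assumes F: "graph VF EF" and ab: "{a, b} \<in> EF" and "card VF < l" "i < l"
  obtains W D where "iso_subgraph VF EF (A_V l) (A_E l) W D"
    "W \<subseteq> {i + 1..i + l}" "i + 1 \<in> W" "{i + 1, i + l} \<in> D"
proof -
  have fin: "finite VF" using F by (simp add: graph_def)
  have VFab: "a \<in> VF" "b \<in> VF" "a \<noteq> b"
    using F ab by (auto elim!: graph_edgeE simp: doubleton_eq_iff)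
  have "3 \<le> l"
    using \<open>card VF < l\<close> card_mono[OF fin, of "{a, b}"] VFab by simp
  obtain g where g: "inj_on g VF" "g a = i + 1" "g b = i + l"
    and "g ` VF \<subseteq> insert (i + 1) (insert (i + l) {i + 2..i + l - 1})"
  proof (rule inj_on_with_two_values[OF fin VFab, of "{i + 2..i + l - 1}" "i + 1" "i + l"])
    show "card VF \<le> card {i + 2..i + l - 1} + 2" using \<open>card VF < l\<close> \<open>3 \<le> l\<close> by simp
  qed (use \<open>3 \<le> l\<close> in auto)
  moreover have "insert (i + 1) (insert (i + l) {i + 2..i + l - 1}) \<subseteq> {i + 1..i + l}"
    using \<open>3 \<le> l\<close> by auto
  ultimately have g_window: "g ` VF \<subseteq> {i + 1..i + l}" by blast
  have "g ` e \<in> A_E l" if "e \<in> EF" for e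
  proof -
    obtain x y where e: "e = {x, y}" and "x \<in> VF" "y \<in> VF" "x \<noteq> y"
      using F \<open>e \<in> EF\<close> by (rule graph_edgeE)
    then have "g x \<in> {i + 1..i + l}" "g y \<in> {i + 1..i + l}" "g x \<noteq> g y"
      using g_window g(1) by (auto simp: inj_on_eq_iff)
    then show ?thesis unfolding e image_insert image_empty
      using \<open>i < l\<close> by (intro A_E_window[of i]) auto
  qed
  moreover have "g ` VF \<subseteq> A_V l" using g_window \<open>i < l\<close> by (force simp: A_V_def)
  ultimately have "iso_subgraph VF EF (A_V l) (A_E l) (g ` VF) (image g ` EF)"
    using F g(1) by (intro iso_subgraph_embedding) auto
  moreover have "{i + 1, i + l} \<in> image g ` EF"
    using ab by (rule rev_image_eqI) (simp add: g(2,3))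
  moreover have "i + 1 \<in> g ` VF" using VFab(1) g(2) by (metis imageI)
  ultimately show ?thesis using g_window that by blast
qed

lemma F_degree_A_less_succ:
  assumes F: "graph VF EF" and ab: "{a, b} \<in> EF" and "card VF < l" and il: "i < l"
  shows "F_degree VF EF (A_V l) (A_E l) i < F_degree VF EF (A_V l) (A_E l) (i + 1)"
proof -
  let ?C = "copies_through VF EF (A_V l) (A_E l)"
  define s where "s = id(i := i + 1)"
  define shift where "shift = map_prod (image s) (image (image s))"
  have fin: "finite (?C v)" for v
    by (rule finite_copies_through) (simp_all add: A_V_def finite_A_E)
  have "inj_on shift (?C i - ?C (i + 1))"
  proof (rule inj_on_subset)
    have "inj_on s (- {i + 1})" by (auto simp: s_def inj_on_def)
    then show "inj_on shift (Pow (- {i + 1}) \<times> Pow (Pow (- {i + 1})))"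
      unfolding shift_def by (rule inj_on_map_prod_image_Pow)
    show "?C i - ?C (i + 1) \<subseteq> Pow (- {i + 1}) \<times> Pow (Pow (- {i + 1}))"
      by (auto simp: copies_through_def iso_subgraph_def)
  qed
  moreover have "shift ` (?C i - ?C (i + 1)) \<subseteq> ?C (i + 1) - ?C i"
  proof (rule image_subsetI)
    fix p assume "p \<in> ?C i - ?C (i + 1)"
    moreover obtain W D where "p = (W, D)" by (cases p)
    ultimately show "shift p \<in> ?C (i + 1) - ?C i"
      using copies_through_A_shift[OF il, of W D VF EF] by (simp add: shift_def s_def)
  qed
  moreover obtain W0 D0 where W0: "iso_subgraph VF EF (A_V l) (A_E l) W0 D0"
    "W0 \<subseteq> {i + 1..i + l}" "i + 1 \<in> W0" "{i + 1, i + l} \<in> D0"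
    using iso_subgraph_A_window[OF F ab \<open>card VF < l\<close> il] .
  then have "(W0, D0) \<in> ?C (i + 1) - ?C i" by (auto simp: copies_through_def)
  moreover have "(W0, D0) \<notin> shift ` (?C i - ?C (i + 1))"
  proof
    assume "(W0, D0) \<in> shift ` (?C i - ?C (i + 1))"
    then obtain W D where WD: "(W, D) \<in> ?C i - ?C (i + 1)" "D0 = image s ` D"
      by (auto simp: shift_def)
    moreover have "D \<subseteq> A_E l" "\<forall>e\<in>D. i + 1 \<notin> e"
      using WD(1) by (auto simp: copies_through_def iso_subgraph_def)
    ultimately show False using W0(4) A_shift_misses_stretched_edge unfolding s_def by blast
  qed
  ultimately have "card (?C i) < card (?C (i + 1))"
    by (rule card_less_if_inj_on_Diff[OF fin fin])
  then show ?thesis by (simp add: F_degree_eq_card_copies_through)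
qed

theorem corollary1:
  fixes VF :: "'b set" and EF :: "'b set set" and l :: nat
  assumes "graph VF EF"
    and "diameter2 VF EF"
    and "l > card VF"
  shows "\<forall>i\<in>{1..<l}. F_degree VF EF (A_V l) (A_E l) i < F_degree VF EF (A_V l) (A_E l) (i + 1)"
proof
  fix i assume "i \<in> {1..<l}"
  obtain a b where "{a, b} \<in> EF" using diameter2_obtains_edge[OF assms(1,2)] .
  with \<open>i \<in> {1..<l}\<close> show "F_degree VF EF (A_V l) (A_E l) i < F_degree VF EF (A_V l) (A_E l) (i + 1)"
    using F_degree_A_less_succ[OF assms(1) _ assms(3)] by simp
qed

end
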